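(* Let $\rho^{\textrm{sep}}$ be a separable state on $\mathbb{C}^d\otimes\mathbb{C}^d$ such that $\operatorname{Tr}(P_\mathcal{A} \rho^{\textrm{sep}})>0$. Then there is a separable state $\rho'^{\textrm{sep}}$ such that $\operatorname{Tr}(P_\mathcal{A} \rho'^{\textrm{sep}})=1/2$ and $\frac{P_\mathcal{A} \rho^{\textrm{sep}} P_\mathcal{A}}{\operatorname{Tr}(P_\mathcal{A} \rho^{\textrm{sep}})}= \frac{P_\mathcal{A} \rho'^{\textrm{sep}} P_\mathcal{A}}{\operatorname{Tr}(P_\mathcal{A} \rho'^{\textrm{sep}})}$.
   Context: Two $d$-dimensional systems $A,B$ with $\mathcal{H}_{AB}=\mathbb{C}^d\otimes\mathbb{C}^d$. $V$ is the swap operator, $V\ket{\alpha}\ket{\beta}=\ket{\beta}\ket{\alpha}$. $P_\mathcal{A}=(\mathbb{1}-V)/2$ is the projector onto the antisymmetric subspace (with $\mathbb{1}$ the identity operator). A state is separable if it can be written as $\sum_k q_k |\alpha_k\rangle\langle\alpha_k|\otimes|\beta_k\rangle\langle\beta_k|$ with $q_k$ a probability distribution. *)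

theory Defs
  imports "HOL-Analysis.Analysis"
begin

text \<open>Operators on C^d (x) C^d are complex matrices indexed by the finite type 'd * 'd;
  the basis vector indexed by (i,j) is |i>|j>.\<close>

definition swap_op :: "complex ^ ('d::finite \<times> 'd) ^ ('d \<times> 'd)" where
  "swap_op = (\<chi> x y. if fst x = snd y \<and> snd x = fst y then 1 else 0)"

definition P_A :: "complex ^ ('d::finite \<times> 'd) ^ ('d \<times> 'd)" where
  "P_A = (\<chi> x y. (mat 1 $ x $ y - swap_op $ x $ y) / 2)"

text \<open>|alpha><alpha| (x) |beta><beta|\<close>
definition prod_proj :: "complex ^ 'd \<Rightarrow> complex ^ 'd \<Rightarrow> complex ^ ('d::finite \<times> 'd) ^ ('d \<times> 'd)" where
  "prod_proj a b = (\<chi> x y. a $ fst x * cnj (a $ fst y) * (b $ snd x * cnj (b $ snd y)))"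

definition cmat_scale :: "complex \<Rightarrow> complex ^ 'n ^ 'm \<Rightarrow> complex ^ 'n ^ 'm" where
  "cmat_scale c M = (\<chi> i j. c * M $ i $ j)"

definition separable :: "complex ^ ('d::finite \<times> 'd) ^ ('d \<times> 'd) \<Rightarrow> bool" where
  "separable \<rho> \<longleftrightarrow> (\<exists>(n::nat) (q::nat \<Rightarrow> real) (a::nat \<Rightarrow> complex ^ 'd) (b::nat \<Rightarrow> complex ^ 'd).
      (\<forall>k<n. q k \<ge> 0 \<and> norm (a k) = 1 \<and> norm (b k) = 1) \<and> (\<Sum>k<n. q k) = 1 \<and>
      \<rho> = (\<Sum>k<n. cmat_scale (complex_of_real (q k)) (prod_proj (a k) (b k))))"

end

theory Submission
  imports Defs
begin

text \<open>For a product vector the antisymmetric part \<open>(a \<otimes> b - b \<otimes> a)/2\<close> does not change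
  when \<open>b\<close> is replaced by its component \<open>u = b - \<langle>a,b\<rangle> a\<close> orthogonal to \<open>a\<close>, and for unit
  \<open>a, b\<close> one has \<open>Tr (P_A |ab\<rangle>\<langle>ab|) = \<parallel>u\<parallel>\<^sup>2/2\<close>. Replacing \<open>b\<close> by \<open>u/\<parallel>u\<parallel>\<close> therefore
  produces a product state of antisymmetric weight exactly \<open>1/2\<close> whose projection
  \<open>P_A |ab\<rangle>\<langle>ab| P_A\<close> is proportional to the old one. Doing this in every term of the
  mixture and reweighting the terms by their antisymmetric weights gives \<open>\<rho>'\<close>.\<close>

definition antisymmetrize :: "('d \<times> 'd \<Rightarrow> complex) \<Rightarrow> 'd \<times> 'd \<Rightarrow> complex" where
  "antisymmetrize v x = (v x - v (prod.swap x)) / 2"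

definition outer :: "('n::finite \<Rightarrow> complex) \<Rightarrow> complex ^ 'n ^ 'n" where
  "outer v = (\<chi> x y. v x * cnj (v y))"

definition tensor :: "complex ^ 'd \<Rightarrow> complex ^ 'd \<Rightarrow> 'd \<times> 'd \<Rightarrow> complex" where
  "tensor a b x = a $ fst x * b $ snd x"

definition cinner :: "complex ^ 'n \<Rightarrow> complex ^ 'n \<Rightarrow> complex" where
  "cinner a b = (\<Sum>i\<in>UNIV. cnj (a $ i) * b $ i)"

lemma P_A_entry: "P_A $ x $ y = (of_bool (y = x) - of_bool (y = prod.swap x)) / 2"
proof -
  have "fst x = snd y \<and> snd x = fst y \<longleftrightarrow> y = prod.swap x"
    by (cases x, cases y) auto
  then show ?thesis
    by (simp add: P_A_def swap_op_def mat_def eq_commute[of x y] of_bool_def)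
qed

lemma P_A_mult_entry: "(P_A ** M) $ x $ y = (M $ x $ y - M $ prod.swap x $ y) / 2"
  unfolding matrix_matrix_mult_def P_A_entry
  by (simp add: diff_divide_distrib left_diff_distrib sum_subtractf sum_divide_distrib[symmetric])

lemma mult_P_A_entry: "(M ** P_A) $ x $ y = (M $ x $ y - M $ x $ prod.swap y) / 2"
proof -
  have "y = prod.swap z \<longleftrightarrow> z = prod.swap y" for z
    by auto
  then show ?thesis
    unfolding matrix_matrix_mult_def P_A_entry
    by (simp add: diff_divide_distrib right_diff_distrib sum_subtractf sum_divide_distrib[symmetric])
qed

lemma P_A_idempotent: "P_A ** P_A = P_A"
  by (simp add: vec_eq_iff P_A_mult_entry P_A_entry)

lemma trace_P_A_mult: "trace (P_A ** M) = trace (P_A ** M ** P_A)"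
  by (metis trace_mul_sym matrix_mul_assoc P_A_idempotent)

lemma cmat_scale_cmat_scale: "cmat_scale c (cmat_scale c' M) = cmat_scale (c * c') M"
  by (simp add: cmat_scale_def vec_eq_iff)

lemma cmat_scale_sum: "cmat_scale c (\<Sum>k\<in>K. M k) = (\<Sum>k\<in>K. cmat_scale c (M k))"
  by (induction K rule: infinite_finite_induct)
    (simp_all add: cmat_scale_def vec_eq_iff distrib_left)

lemma trace_cmat_scale: "trace (cmat_scale c M) = c * trace M"
  by (simp add: trace_def cmat_scale_def sum_distrib_left)

lemma trace_sum: "trace (\<Sum>k\<in>K. M k) = (\<Sum>k\<in>K. trace (M k))"
  by (induction K rule: infinite_finite_induct) (simp_all add: trace_def sum.distrib)

lemma cmat_scale_sandwich_sum:
  fixes A B :: "complex ^ 'n ^ 'n" and M :: "'k \<Rightarrow> complex ^ 'n ^ 'n"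
  shows "A ** (\<Sum>k\<in>K. cmat_scale (c k) (M k)) ** B = (\<Sum>k\<in>K. cmat_scale (c k) (A ** M k ** B))"
proof (induction K rule: infinite_finite_induct)
  case (insert k K)
  have "A ** (X + Y) ** B = A ** X ** B + A ** Y ** B" for X Y :: "complex ^ 'n ^ 'n"
    by (simp add: vec_eq_iff matrix_matrix_mult_def sum.distrib algebra_simps)
  moreover have "A ** cmat_scale c X ** B = cmat_scale c (A ** X ** B)" for c and X :: "complex ^ 'n ^ 'n"
    by (simp add: vec_eq_iff matrix_matrix_mult_def cmat_scale_def sum_distrib_left mult_ac)
  ultimately show ?case using insert by simp
qed simp_all

lemma prod_proj_eq_outer_tensor: "prod_proj a b = outer (tensor a b)"
  by (simp add: prod_proj_def outer_def tensor_def vec_eq_iff)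

lemma outer_scale: "outer (\<lambda>x. c * v x) = cmat_scale (c * cnj c) (outer v)"
  by (simp add: outer_def cmat_scale_def vec_eq_iff mult_ac)

lemma P_A_sandwich_outer: "P_A ** outer v ** P_A = outer (antisymmetrize v)"
  by (simp add: vec_eq_iff P_A_mult_entry mult_P_A_entry outer_def antisymmetrize_def field_simps)

lemma antisymmetrize_tensor_sub_self:
  "antisymmetrize (tensor a (b - c *s a)) = antisymmetrize (tensor a b)"
  by (auto simp: antisymmetrize_def tensor_def algebra_simps)

lemma antisymmetrize_tensor_scaleR:
  "antisymmetrize (tensor a (r *\<^sub>R b)) x = of_real r * antisymmetrize (tensor a b) x"
  unfolding antisymmetrize_def tensor_def vector_scaleR_component
  by (simp add: scaleR_conv_of_real algebra_simps)

lemma cinner_self_eq_norm_power2: "cinner a a = of_real ((norm a)\<^sup>2)"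
proof -
  have "(norm a)\<^sup>2 = (\<Sum>i\<in>UNIV. (norm (a $ i))\<^sup>2)"
    unfolding norm_vec_def L2_set_def by (simp add: sum_nonneg)
  then show ?thesis
    by (simp only: cinner_def of_real_sum complex_norm_square) (simp add: mult.commute)
qed

lemma cinner_sub_proj_self:
  assumes "cinner a a = 1"
  shows "cinner (b - cinner a b *s a) (b - cinner a b *s a) = cinner b b - cinner a b * cnj (cinner a b)"
proof -
  define c where "c = cinner a b"
  have "cinner (b - c *s a) (b - c *s a) =
      cinner b b - c * cnj (cinner a b) - cnj c * cinner a b + c * cnj c * cinner a a"
    by (simp add: cinner_def cnj_sum sum_subtractf sum.distrib sum_distrib_left algebra_simps)
  then show ?thesis
    using assms by (simp add: c_def)
qed

lemma trace_P_A_prod_proj_cinner: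
  "trace (P_A ** prod_proj a b) = (cinner a a * cinner b b - cinner a b * cnj (cinner a b)) / 2"
proof -
  have "trace (P_A ** prod_proj a b) =
      (\<Sum>i\<in>UNIV. \<Sum>j\<in>UNIV. (a$i * b$j - a$j * b$i) / 2 * cnj (a$i * b$j))"
    unfolding trace_def P_A_mult_entry prod_proj_def sum.cartesian_product UNIV_Times_UNIV
    by (rule sum.cong) (auto simp: field_simps)
  also have "\<dots> = ((\<Sum>i\<in>UNIV. \<Sum>j\<in>UNIV. (cnj (a$i) * a$i) * (cnj (b$j) * b$j))
      - (\<Sum>i\<in>UNIV. \<Sum>j\<in>UNIV. (cnj (a$i) * b$i) * cnj (cnj (a$j) * b$j))) / 2"
    by (simp add: sum_subtractf[symmetric] sum_divide_distrib algebra_simps diff_divide_distrib)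
  finally show ?thesis
    by (simp add: sum_product cinner_def cnj_sum)
qed

lemma trace_P_A_prod_proj:
  assumes "norm a = 1" "norm b = 1"
  shows "trace (P_A ** prod_proj a b) = of_real ((norm (b - cinner a b *s a))\<^sup>2 / 2)"
proof -
  define u where "u = b - cinner a b *s a"
  have "cinner a a = 1" "cinner b b = 1"
    using assms by (simp_all add: cinner_self_eq_norm_power2)
  then have "of_real ((norm u)\<^sup>2) = cinner a a * cinner b b - cinner a b * cnj (cinner a b)"
    by (simp only: u_def cinner_sub_proj_self flip: cinner_self_eq_norm_power2) simp
  then show ?thesis
    unfolding trace_P_A_prod_proj_cinner u_def[symmetric] by simp
qed

lemma P_A_sandwich_prod_proj_rescale:
  assumes "norm a = 1" "norm b = 1"
  shows "\<exists>b'. norm b' = 1 \<and>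
    cmat_scale (trace (P_A ** prod_proj a b)) (P_A ** prod_proj a b' ** P_A) =
    cmat_scale (1/2) (P_A ** prod_proj a b ** P_A)"
proof -
  define u where "u = b - cinner a b *s a"
  have sandwich: "P_A ** prod_proj a v ** P_A = outer (antisymmetrize (tensor a v))" for v
    by (simp add: prod_proj_eq_outer_tensor P_A_sandwich_outer)
  have anti_u: "antisymmetrize (tensor a u) = antisymmetrize (tensor a b)"
    unfolding u_def by (rule antisymmetrize_tensor_sub_self)
  have trace: "trace (P_A ** prod_proj a b) = of_real ((norm u)\<^sup>2 / 2)"
    unfolding u_def by (rule trace_P_A_prod_proj[OF assms])
  show ?thesis
  proof (cases "u = 0")
    case True
    then have "antisymmetrize (tensor a b) = (\<lambda>_. 0)"
      by (simp add: anti_u[symmetric] antisymmetrize_def tensor_def fun_eq_iff)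
    then have "P_A ** prod_proj a b ** P_A = 0"
      by (simp add: sandwich outer_def vec_eq_iff)
    then show ?thesis
      using assms(2) True by (intro exI[of _ b]) (simp add: trace cmat_scale_def vec_eq_iff)
  next
    case False
    have "antisymmetrize (tensor a (sgn u)) =
        (\<lambda>x. of_real (inverse (norm u)) * antisymmetrize (tensor a b) x)"
      unfolding sgn_div_norm divide_inverse_commute antisymmetrize_tensor_scaleR anti_u ..
    then have "P_A ** prod_proj a (sgn u) ** P_A = cmat_scale (of_real (inverse ((norm u)\<^sup>2))) (P_A ** prod_proj a b ** P_A)"
      by (simp add: sandwich outer_scale power2_eq_square del: of_real_inverse)
    then show ?thesis
      using False by (intro exI[of _ "sgn u"]) (simp add: norm_sgn trace cmat_scale_cmat_scale field_simps)
  qed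
qed

lemma separable_P_A_sandwich_rescale:
  fixes \<rho> :: "complex ^ ('d::finite \<times> 'd) ^ ('d \<times> 'd)"
  assumes "separable \<rho>" and trace: "trace (P_A ** \<rho>) = of_real T" and "T > 0"
  shows "\<exists>\<rho>'. separable \<rho>' \<and> P_A ** \<rho>' ** P_A = cmat_scale (1 / (2 * of_real T)) (P_A ** \<rho> ** P_A)"
proof -
  obtain n q and a b :: "nat \<Rightarrow> complex ^ 'd" where
    unit: "\<forall>k<n. q k \<ge> 0 \<and> norm (a k) = 1 \<and> norm (b k) = 1"
    and \<rho>: "\<rho> = (\<Sum>k<n. cmat_scale (of_real (q k)) (prod_proj (a k) (b k)))"
    using assms(1) unfolding separable_def by blast
  define w where "w k = (norm (b k - cinner (a k) (b k) *s a k))\<^sup>2 / 2" for k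
  have w: "trace (P_A ** prod_proj (a k) (b k)) = of_real (w k)" if "k < n" for k
    using unit that by (simp add: w_def trace_P_A_prod_proj)
  have "\<forall>k<n. \<exists>b'. norm b' = 1 \<and>
      cmat_scale (of_real (w k)) (P_A ** prod_proj (a k) b' ** P_A) =
      cmat_scale (1/2) (P_A ** prod_proj (a k) (b k) ** P_A)"
    using P_A_sandwich_prod_proj_rescale unit w by metis
  then obtain b' where b': "\<forall>k<n. norm (b' k) = 1 \<and>
      cmat_scale (of_real (w k)) (P_A ** prod_proj (a k) (b' k) ** P_A) =
      cmat_scale (1/2) (P_A ** prod_proj (a k) (b k) ** P_A)"
    by metis
  have "trace (P_A ** \<rho>) = (\<Sum>k<n. of_real (q k * w k))"
    using w unfolding \<rho> cmat_scale_sandwich_sum[of P_A _ _ _ "mat 1", simplified]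
    by (simp add: trace_sum trace_cmat_scale)
  then have T: "T = (\<Sum>k<n. q k * w k)"
    unfolding trace of_real_sum[symmetric] of_real_eq_iff .
  define q' where "q' k = q k * w k / T" for k
  define \<rho>' where "\<rho>' = (\<Sum>k<n. cmat_scale (of_real (q' k)) (prod_proj (a k) (b' k)))"
  have "separable \<rho>'"
    unfolding separable_def
  proof (intro exI conjI)
    show "\<forall>k<n. q' k \<ge> 0 \<and> norm (a k) = 1 \<and> norm (b' k) = 1"
      using unit b' \<open>T > 0\<close> by (simp add: q'_def w_def)
    show "(\<Sum>k<n. q' k) = 1"
      using \<open>T > 0\<close> by (simp add: q'_def T sum_divide_distrib[symmetric])
  qed (rule \<rho>'_def)
  moreover have "P_A ** \<rho>' ** P_A = cmat_scale (1 / (2 * of_real T)) (P_A ** \<rho> ** P_A)"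
  proof -
    have "cmat_scale (of_real (q' k)) (P_A ** prod_proj (a k) (b' k) ** P_A) =
        cmat_scale (1 / (2 * of_real T)) (cmat_scale (of_real (q k)) (P_A ** prod_proj (a k) (b k) ** P_A))"
      if "k < n" for k
    proof -
      have "cmat_scale (of_real (q' k)) (P_A ** prod_proj (a k) (b' k) ** P_A) =
          cmat_scale (of_real (q k / T)) (cmat_scale (of_real (w k)) (P_A ** prod_proj (a k) (b' k) ** P_A))"
        by (simp add: q'_def cmat_scale_cmat_scale)
      also have "\<dots> = cmat_scale (of_real (q k / T)) (cmat_scale (1/2) (P_A ** prod_proj (a k) (b k) ** P_A))"
        using b' that by simp
      finally show ?thesis
        by (simp add: cmat_scale_cmat_scale mult.commute)
    qed
    then show ?thesis
      unfolding \<rho>'_def \<rho> cmat_scale_sandwich_sum cmat_scale_sum by simp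
  qed
  ultimately show ?thesis
    by blast
qed

theorem lemma1:
  fixes \<rho> :: "complex ^ ('d::finite \<times> 'd) ^ ('d \<times> 'd)"
  assumes "separable \<rho>"
    and "Im (trace (P_A ** \<rho>)) = 0" and "Re (trace (P_A ** \<rho>)) > 0"
  shows "\<exists>\<rho>' :: complex ^ ('d \<times> 'd) ^ ('d \<times> 'd). separable \<rho>' \<and>
           trace (P_A ** \<rho>') = 1/2 \<and>
           cmat_scale (inverse (trace (P_A ** \<rho>))) (P_A ** \<rho> ** P_A) =
           cmat_scale (inverse (trace (P_A ** \<rho>'))) (P_A ** \<rho>' ** P_A)"
proof -
  define T where "T = Re (trace (P_A ** \<rho>))"
  have trace: "trace (P_A ** \<rho>) = of_real T"
    using assms(2) by (simp add: T_def complex_eq_iff)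
  obtain \<rho>' where "separable \<rho>'"
    and sandwich: "P_A ** \<rho>' ** P_A = cmat_scale (1 / (2 * of_real T)) (P_A ** \<rho> ** P_A)"
    using separable_P_A_sandwich_rescale[OF assms(1) trace] assms(3) T_def by blast
  have trace': "trace (P_A ** \<rho>') = 1/2"
    using assms(3) unfolding trace_P_A_mult[of \<rho>'] sandwich trace_cmat_scale
      trace_P_A_mult[of \<rho>, symmetric] trace T_def[symmetric] by simp
  moreover have "cmat_scale (inverse (trace (P_A ** \<rho>))) (P_A ** \<rho> ** P_A) =
      cmat_scale (inverse (trace (P_A ** \<rho>'))) (P_A ** \<rho>' ** P_A)"
    unfolding trace trace' by (simp add: sandwich cmat_scale_cmat_scale inverse_eq_divide)
  ultimately show ?thesis
    using \<open>separable \<rho>'\<close> by blast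
qed

end
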